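(* Let $\sigma>0$, $\lambda_1,\lambda_2>0$, $m_g\ge1$. Suppose $\boldsymbol\beta_g\mid\tau_{g1}^2,\dots,\tau_{gm_g}^2,\gamma_g^2,\sigma^2\sim N_{m_g}(\mathbf 0,\sigma^2\mathbf V_g)$ with $\mathbf V_g=\mathrm{diag}\{(\tau_{gj}^{-2}+\gamma_g^{-2})^{-1}, j=1,\dots,m_g\}$, and $(\tau_{g1}^2,\dots,\tau_{gm_g}^2,\gamma_g^2)\in(0,\infty)^{m_g+1}$ has density $$\pi(\tau^2_{g1},\dots,\tau^2_{gm_g},\gamma^2_g)=c_g(\lambda_1^2,\lambda_2^2)\prod_{j=1}^{m_g}\Big[(\tau^2_{gj})^{-1/2}\Big(\frac1{\tau^2_{gj}}+\frac1{\gamma^2_g}\Big)^{-1/2}\Big](\gamma_g^2)^{-1/2}\exp\Big\{-\frac{\lambda_1^2}{2}\sum_{j=1}^{m_g}\tau^2_{gj}-\frac{\lambda_2^2}{2}\gamma_g^2\Big\}.$$ Then this density is integrable (so a normalizing constant $c_g(\lambda_1^2,\lambda_2^2)\in(0,\infty)$ exists, i.e., the prior is proper), and the marginal prior of $\boldsymbol\beta_g$ satisfies $$\pi(\boldsymbol\beta_g\mid\sigma^2)\propto\exp\Big\{-\frac{\lambda_1}{\sigma}\|\boldsymbol\beta_g\|_1-\frac{\lambda_2}{\sigma}\|\boldsymbol\beta_g\|_2\Big\}.$$ *)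

theory Defs
  imports "HOL-Probability.Probability"
begin

text \<open>Group size m_g is the cardinality of the finite index type 'n (so m_g >= 1).
  A point of the hyperparameter space is a pair (t, g) with t $ j = tau_{gj}^2 and g = gamma_g^2.\<close>

definition hyper_dom :: "((real^'n) \<times> real) set" where
  "hyper_dom = {(t, g). (\<forall>j. 0 < t $ j) \<and> 0 < g}"

definition prior_unnorm :: "real \<Rightarrow> real \<Rightarrow> (real^'n) \<times> real \<Rightarrow> real" where
  "prior_unnorm l1 l2 = (\<lambda>(t, g).
     if (t, g) \<in> hyper_dom then
       (\<Prod>j\<in>UNIV. (t $ j) powr (-1/2) * (1 / t $ j + 1 / g) powr (-1/2))
       * g powr (-1/2) * exp (- (l1\<^sup>2 / 2) * (\<Sum>j\<in>UNIV. t $ j) - (l2\<^sup>2 / 2) * g)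
     else 0)"

text \<open>Density of N_{m_g}(0, sigma^2 V_g) at beta, V_g = diag((tau_j^-2 + gamma^-2)^-1);
  with diagonal covariance this is the product of univariate normal densities
  (normal_density takes the standard deviation).\<close>
definition cond_beta_density :: "real \<Rightarrow> (real^'n) \<times> real \<Rightarrow> real^'n \<Rightarrow> real" where
  "cond_beta_density \<sigma> = (\<lambda>(t, g) \<beta>.
     \<Prod>j\<in>UNIV. normal_density 0 (sqrt (\<sigma>\<^sup>2 * inverse (1 / t $ j + 1 / g))) (\<beta> $ j))"

end

theory Submission
  imports Defs
begin

(*
  Multiplying the conditional normal density of beta by the prior, the prior factor
  (1/tau_j^2 + 1/gamma^2)^(-1/2) cancels the variance-dependent part of each normal
  normalising constant, and the joint density factorises into kernels t^(-1/2) exp(-a/t - b t)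
  in tau_1^2, ..., tau_m^2 and gamma^2, with a = beta_j^2/(2 sigma^2) resp.
  a = ||beta||^2/(2 sigma^2). Such a kernel integrates to sqrt(pi/b) exp(-2 sqrt(a b)): the
  substitution t = v^2/b reduces this to the Cauchy-Schloemilch identity
  int_0^oo exp(-(v - k/v)^2) dv = sqrt pi / 2, which follows from the Gaussian integral since
  v |-> k/v turns the integrand into k/v^2 times itself and v |-> v - k/v maps (0, oo) onto the
  real line. Integrating out the hyperparameters therefore leaves exp(-lambda_1 |beta_j| / sigma)
  and exp(-lambda_2 ||beta|| / sigma). The prior is integrable since the cancelling factor is at
  most 1, and its integral is positive since the marginal is.
*)

lemma borel_measurable_vec_nth_comp [measurable (raw)]:
  fixes f :: "'a \<Rightarrow> real^'n"
  shows "f \<in> borel_measurable M \<Longrightarrow> (\<lambda>x. f x $ i) \<in> borel_measurable M"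
  using measurable_compose[OF _ borel_measurable_nth] by blast

lemma nn_integral_lborel_vec_prod:
  fixes f :: "'n::finite \<Rightarrow> real \<Rightarrow> ennreal"
  assumes [measurable]: "\<And>j. f j \<in> borel_measurable borel"
  shows "(\<integral>\<^sup>+x. (\<Prod>j\<in>UNIV. f j (x $ j)) \<partial>(lborel :: (real^'n) measure))
       = (\<Prod>j\<in>UNIV. \<integral>\<^sup>+t. f j t \<partial>lborel)"
proof -
  have "(\<Prod>j\<in>UNIV. f j (x $ j)) = (\<Prod>b\<in>Basis. f (axis_index b) (x \<bullet> b))" for x :: "real^'n"
    by (simp add: Basis_vec_def UNION_singleton_eq_range prod.reindex axis_eq_axis inj_on_def
        inner_axis)
  moreover have "(\<Prod>j\<in>UNIV. \<integral>\<^sup>+t. f j t \<partial>lborel)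
      = (\<Prod>b\<in>(Basis :: (real^'n) set). \<integral>\<^sup>+t. f (axis_index b) t \<partial>lborel)"
    by (simp add: Basis_vec_def UNION_singleton_eq_range prod.reindex axis_eq_axis inj_on_def)
  ultimately show ?thesis
    by (simp only:) (rule nn_integral_lborel_prod, auto)
qed

lemma nn_integral_lborel_vec_real_prod:
  fixes f :: "'n::finite \<Rightarrow> real \<Rightarrow> ennreal" and h :: "real \<Rightarrow> ennreal"
  assumes [measurable]: "\<And>j. f j \<in> borel_measurable borel" "h \<in> borel_measurable borel"
  shows "(\<integral>\<^sup>+x. (\<Prod>j\<in>UNIV. f j (fst x $ j)) * h (snd x) \<partial>(lborel :: ((real^'n) \<times> real) measure))
       = (\<Prod>j\<in>UNIV. \<integral>\<^sup>+t. f j t \<partial>lborel) * (\<integral>\<^sup>+t. h t \<partial>lborel)"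
proof -
  have "(\<integral>\<^sup>+x. (\<Prod>j\<in>UNIV. f j (fst x $ j)) * h (snd x) \<partial>(lborel :: ((real^'n) \<times> real) measure))
      = (\<integral>\<^sup>+(s :: real^'n). \<integral>\<^sup>+t. (\<Prod>j\<in>UNIV. f j (s $ j)) * h t \<partial>lborel \<partial>lborel)"
    by (simp add: lborel_prod[symmetric] lborel.nn_integral_fst[symmetric])
  also have "\<dots> = (\<integral>\<^sup>+(s :: real^'n). (\<Prod>j\<in>UNIV. f j (s $ j)) \<partial>lborel) * (\<integral>\<^sup>+t. h t \<partial>lborel)"
    by (simp add: nn_integral_cmult nn_integral_multc)
  finally show ?thesis
    unfolding nn_integral_lborel_vec_prod[OF assms(1)] .
qed

section \<open>Substitution and the Cauchy-Schloemilch integral\<close>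

lemma has_integral_substitution_nonneg:
  fixes f g g' :: "real \<Rightarrow> real"
  assumes S: "S \<in> sets lebesgue"
    and der: "\<And>x. x \<in> S \<Longrightarrow> (g has_field_derivative g' x) (at x within S)"
    and inj: "inj_on g S"
    and nonneg: "\<And>y. y \<in> g ` S \<Longrightarrow> 0 \<le> f y"
  shows "((\<lambda>x. \<bar>g' x\<bar> * f (g x)) has_integral b) S \<longleftrightarrow> (f has_integral b) (g ` S)"
proof -
  have abs_iff: "h absolutely_integrable_on T \<and> integral T h = b \<longleftrightarrow> (h has_integral b) T"
    if "\<And>x. x \<in> T \<Longrightarrow> 0 \<le> h x" for h :: "real \<Rightarrow> real" and T
    using that nonnegative_absolutely_integrable_1 absolutely_integrable_on_def
      has_integral_integrable_integral by blast
  show ?thesis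
    using has_absolute_integral_change_of_variables_1'[OF S der inj, of f b]
      abs_iff[of S "\<lambda>x. \<bar>g' x\<bar> * f (g x)"] abs_iff[of "g ` S" f] nonneg
    by auto
qed

lemma gaussian_has_integral: "((\<lambda>x::real. exp (- x\<^sup>2)) has_integral sqrt pi) UNIV"
proof -
  have "(normal_density 0 (1 / sqrt 2) has_integral 1) UNIV"
    using has_integral_integral_real[OF integrable_normal_density] by simp
  then have "((\<lambda>x. sqrt pi * normal_density 0 (1 / sqrt 2) x) has_integral sqrt pi * 1) UNIV"
    by (rule has_integral_mult_right)
  moreover have "sqrt pi * normal_density 0 (1 / sqrt 2) x = exp (- x\<^sup>2)" for x :: real
    unfolding normal_density_def by (simp add: power_divide)
  ultimately show ?thesis
    by simp
qed

lemma gaussian_half_line_has_integral: "((\<lambda>x::real. exp (- x\<^sup>2)) has_integral sqrt pi / 2) {0<..}"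
proof -
  have "((\<lambda>x::real. indicator {0..} x *\<^sub>R exp (- x\<^sup>2)) has_integral sqrt pi / 2) UNIV"
    using gaussian_moment_0 has_integral_integral_real
    by (metis has_bochner_integral_iff)
  then have "((\<lambda>x::real. if x \<in> {0..} then exp (- x\<^sup>2) else 0) has_integral sqrt pi / 2) UNIV"
    by (rule has_integral_eq[rotated]) (simp add: indicator_def)
  then have "((\<lambda>x::real. exp (- x\<^sup>2)) has_integral sqrt pi / 2) {0..}"
    using has_integral_restrict_UNIV[of "{0..}" "\<lambda>x::real. exp (- x\<^sup>2)"] by simp
  then show ?thesis
    by (subst has_integral_spike_set_eq[where T="{0..}"]) (auto intro: negligible_subset[of "{0}"])
qed

lemma cauchy_schloemilch_weighted_has_integral:
  fixes k :: real
  assumes k: "0 < k"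
  shows "((\<lambda>v. (1 + k / v\<^sup>2) * exp (- (v - k / v)\<^sup>2)) has_integral sqrt pi) {0<..}"
proof -
  have der: "((\<lambda>v. v - k / v) has_field_derivative 1 + k / v\<^sup>2) (at v within {0<..})"
    if "v \<in> {0<..}" for v
    using that by (auto intro!: derivative_eq_intros simp: power2_eq_square field_simps)
  have inj: "inj_on (\<lambda>v. v - k / v) {0<..}"
  proof (rule inj_onI)
    fix x y :: real
    assume x: "x \<in> {0<..}" and y: "y \<in> {0<..}" and "x - k / x = y - k / y"
    then have "(x - y) * (x * y + k) = 0"
      by (simp add: field_simps)
    moreover have "0 < x * y + k"
      using x y k by (simp add: add_pos_pos)
    ultimately show "x = y"
      by simp
  qed
  have surj: "(\<lambda>v. v - k / v) ` {0<..} = UNIV"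
  proof -
    have "w \<in> (\<lambda>v. v - k / v) ` {0<..}" for w
    proof
      define v where "v = (w + sqrt (w\<^sup>2 + 4 * k)) / 2"
      have "\<bar>w\<bar> < sqrt (w\<^sup>2 + 4 * k)"
        using k real_sqrt_less_mono[of "w\<^sup>2" "w\<^sup>2 + 4 * k"] by simp
      then show v_pos: "v \<in> {0<..}"
        unfolding v_def by (auto simp: abs_less_iff)
      have "v\<^sup>2 - w * v = k"
        unfolding v_def using k by (simp add: power2_eq_square field_simps)
      then show "w = v - k / v"
        using v_pos by (simp add: field_simps power2_eq_square)
    qed
    then show ?thesis by blast
  qed
  show ?thesis
    using has_integral_substitution_nonneg[OF _ der inj, of "\<lambda>x. exp (- x\<^sup>2)" "sqrt pi"]
      gaussian_has_integral k
    unfolding surj by (simp add: abs_of_pos)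
qed

lemma cauchy_schloemilch_reflection:
  fixes k I :: real
  assumes k: "0 < k" and e: "((\<lambda>v. exp (- (v - k / v)\<^sup>2)) has_integral I) {0<..}"
  shows "((\<lambda>v. k / v\<^sup>2 * exp (- (v - k / v)\<^sup>2)) has_integral I) {0<..}"
proof -
  let ?S = "{0<..} :: real set"
  let ?e = "\<lambda>v. exp (- (v - k / v)\<^sup>2)"
  have reflect_inv: "k / (k / v) = v" "k / v \<in> ?S" if "v \<in> ?S" for v
    using that k by auto
  have reflect_inj: "inj_on (\<lambda>v. k / v) ?S"
    using reflect_inv by (metis inj_on_inverseI)
  have reflect_image: "(\<lambda>v. k / v) ` ?S = ?S"
  proof (intro equalityI image_subsetI subsetI)
    show "k / v \<in> ?S" if "v \<in> ?S" for v
      using that reflect_inv by blast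
    show "v \<in> (\<lambda>v. k / v) ` ?S" if "v \<in> ?S" for v
      using that reflect_inv by (metis image_eqI)
  qed
  have reflect_deriv: "((\<lambda>v. k / v) has_field_derivative - k / v\<^sup>2) (at v within ?S)"
    if "v \<in> ?S" for v
    using that by (auto intro!: derivative_eq_intros simp: power2_eq_square)
  have "((\<lambda>v. \<bar>- k / v\<^sup>2\<bar> * ?e (k / v)) has_integral I) ?S"
    by (subst has_integral_substitution_nonneg[OF _ reflect_deriv reflect_inj])
       (auto simp: reflect_image e)
  moreover have "\<bar>- k / v\<^sup>2\<bar> * ?e (k / v) = k / v\<^sup>2 * ?e v" if "v \<in> ?S" for v
    using that k by (simp add: power2_commute)
  ultimately show ?thesis
    using has_integral_eq by (metis (no_types, lifting))
qed

lemma cauchy_schloemilch_has_integral: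
  fixes k :: real
  assumes "0 \<le> k"
  shows "((\<lambda>v. exp (- (v - k / v)\<^sup>2)) has_integral sqrt pi / 2) {0<..}"
proof (cases "k = 0")
  case True
  then show ?thesis using gaussian_half_line_has_integral by simp
next
  case False
  with assms have k: "0 < k" by simp
  let ?S = "{0<..} :: real set"
  let ?e = "\<lambda>v. exp (- (v - k / v)\<^sup>2)"
  have sum: "((\<lambda>v. ?e v + k / v\<^sup>2 * ?e v) has_integral sqrt pi) ?S"
    using cauchy_schloemilch_weighted_has_integral[OF k] by (simp add: distrib_right)
  have "?e absolutely_integrable_on ?S"
  proof (rule measurable_bounded_by_integrable_imp_absolutely_integrable)
    have "continuous_on ?S ?e"
      by (intro continuous_intros) auto
    then show "?e \<in> borel_measurable (lebesgue_on ?S)"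
      by (rule continuous_imp_measurable_on_sets_lebesgue) simp
    show "norm (?e v) \<le> ?e v + k / v\<^sup>2 * ?e v" if "v \<in> ?S" for v
      using that k by simp
  qed (use sum in auto)
  then obtain I where e: "(?e has_integral I) ?S"
    using absolutely_integrable_on_def by blast
  then have "((\<lambda>v. k / v\<^sup>2 * ?e v) has_integral I) ?S"
    by (rule cauchy_schloemilch_reflection[OF k])
  then have "I + I = sqrt pi"
    using has_integral_unique[OF has_integral_add[OF e] sum] by blast
  then have "I = sqrt pi / 2"
    by linarith
  then show ?thesis
    using e by (simp only:)
qed

section \<open>The generalised inverse Gaussian kernel\<close>

lemma powr_minus_half: "0 < x \<Longrightarrow> x powr (-1/2) = 1 / sqrt (x :: real)"
  by (simp add: powr_minus_divide powr_half_sqrt)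

definition gig_half_kernel :: "real \<Rightarrow> real \<Rightarrow> real \<Rightarrow> real" where
  "gig_half_kernel a b t = (if 0 < t then t powr (-1/2) * exp (- a / t - b * t) else 0)"

lemma gig_half_kernel_nonneg: "0 \<le> gig_half_kernel a b t"
  by (simp add: gig_half_kernel_def)

lemma borel_measurable_gig_half_kernel [measurable]: "gig_half_kernel a b \<in> borel_measurable borel"
  unfolding gig_half_kernel_def[abs_def] by measurable

lemma gig_half_kernel_square_substitution:
  fixes a b v :: real
  assumes "0 \<le> a" "0 < b" "0 < v"
  shows "\<bar>2 * v / b\<bar> * gig_half_kernel a b (v\<^sup>2 / b)
       = 2 / sqrt b * exp (- 2 * sqrt (a * b)) * exp (- (v - sqrt (a * b) / v)\<^sup>2)"
proof -
  define k where "k = sqrt (a * b)"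
  have "k\<^sup>2 = a * b"
    unfolding k_def using assms by simp
  then have exponent: "- a / (v\<^sup>2 / b) - b * (v\<^sup>2 / b) = - 2 * k + - (v - k / v)\<^sup>2"
    using assms by (simp add: power2_eq_square field_simps)
  have "(v\<^sup>2 / b) powr (-1/2) = sqrt b / v"
    using assms powr_minus_half[of "v\<^sup>2 / b"] by (simp add: real_sqrt_divide)
  then have "\<bar>2 * v / b\<bar> * gig_half_kernel a b (v\<^sup>2 / b)
      = (2 * v / b * (sqrt b / v)) * (exp (- 2 * k) * exp (- (v - k / v)\<^sup>2))"
    using assms unfolding gig_half_kernel_def exponent exp_add by simp
  also have "2 * v / b * (sqrt b / v) = 2 / sqrt b"
    using assms by (simp add: field_simps flip: real_sqrt_mult)
  finally show ?thesis
    unfolding k_def by simp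
qed

lemma has_integral_gig_half_kernel:
  fixes a b :: real
  assumes a: "0 \<le> a" and b: "0 < b"
  shows "(gig_half_kernel a b has_integral sqrt (pi / b) * exp (- 2 * sqrt (a * b))) {0<..}"
proof -
  let ?S = "{0<..} :: real set"
  define C where "C = 2 / sqrt b * exp (- 2 * sqrt (a * b))"
  have "((\<lambda>v. C * exp (- (v - sqrt (a * b) / v)\<^sup>2)) has_integral C * (sqrt pi / 2)) ?S"
    using a b by (intro has_integral_mult_right cauchy_schloemilch_has_integral) simp
  then have "((\<lambda>v. \<bar>2 * v / b\<bar> * gig_half_kernel a b (v\<^sup>2 / b)) has_integral C * (sqrt pi / 2)) ?S"
    by (rule has_integral_eq[rotated])
      (use gig_half_kernel_square_substitution[OF a b] in \<open>simp add: C_def\<close>)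
  moreover have "((\<lambda>v. v\<^sup>2 / b) has_field_derivative 2 * v / b) (at v within ?S)" for v
    using b by (auto intro!: derivative_eq_intros simp: power2_eq_square)
  moreover have "inj_on (\<lambda>v. v\<^sup>2 / b) ?S"
    using b by (auto simp: inj_on_def power2_eq_iff)
  moreover have "(\<lambda>v. v\<^sup>2 / b) ` ?S = ?S"
  proof (intro equalityI image_subsetI subsetI)
    show "v\<^sup>2 / b \<in> ?S" if "v \<in> ?S" for v
      using that b by simp
    show "t \<in> (\<lambda>v. v\<^sup>2 / b) ` ?S" if "t \<in> ?S" for t
      using that b by (intro image_eqI[of _ _ "sqrt (t * b)"]) auto
  qed
  ultimately have "(gig_half_kernel a b has_integral C * (sqrt pi / 2)) ?S"
    using has_integral_substitution_nonneg[of ?S "\<lambda>v. v\<^sup>2 / b" "\<lambda>v. 2 * v / b" "gig_half_kernel a b"]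
    by (simp add: gig_half_kernel_nonneg)
  moreover have "C * (sqrt pi / 2) = sqrt (pi / b) * exp (- 2 * sqrt (a * b))"
    unfolding C_def by (simp add: real_sqrt_divide)
  ultimately show ?thesis
    by simp
qed

lemma nn_integral_gig_half_kernel:
  fixes a b :: real
  assumes "0 \<le> a" "0 < b"
  shows "(\<integral>\<^sup>+t. gig_half_kernel a b t \<partial>lborel) = ennreal (sqrt (pi / b) * exp (- 2 * sqrt (a * b)))"
proof -
  have "(\<integral>\<^sup>+t. gig_half_kernel a b t \<partial>lborel) = (\<integral>\<^sup>+t. ennreal (gig_half_kernel a b t) * indicator {0<..} t \<partial>lborel)"
    by (rule nn_integral_cong) (simp add: gig_half_kernel_def indicator_def)
  also have "\<dots> = ennreal (sqrt (pi / b) * exp (- 2 * sqrt (a * b)))"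
    using has_integral_gig_half_kernel[OF assms] by (rule nn_integral_has_integral_lebesgue'[rotated])
      (simp add: gig_half_kernel_nonneg)
  finally show ?thesis .
qed

lemma nn_integral_gig_half_kernel_laplace:
  fixes s l y :: real
  assumes s: "0 < s" and l: "0 < l"
  shows "(\<integral>\<^sup>+t. gig_half_kernel (y\<^sup>2 / (2 * s\<^sup>2)) (l\<^sup>2 / 2) t \<partial>lborel)
       = ennreal (sqrt (2 * pi) / l * exp (- (l / s) * \<bar>y\<bar>))"
proof -
  have "y\<^sup>2 / (2 * s\<^sup>2) * (l\<^sup>2 / 2) = (l * \<bar>y\<bar> / (2 * s))\<^sup>2"
    by (simp add: power2_eq_square field_simps)
  then have "2 * sqrt (y\<^sup>2 / (2 * s\<^sup>2) * (l\<^sup>2 / 2)) = l / s * \<bar>y\<bar>"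
    using s l by simp
  moreover have "sqrt (pi / (l\<^sup>2 / 2)) = sqrt (2 * pi) / l"
    using l by (simp add: real_sqrt_divide real_sqrt_mult)
  ultimately show ?thesis
    using nn_integral_gig_half_kernel[of "y\<^sup>2 / (2 * s\<^sup>2)" "l\<^sup>2 / 2"] l by simp
qed

lemma nn_integral_gig_half_kernel_normal:
  fixes s l y :: real
  assumes s: "0 < s" and l: "0 < l"
  shows "(\<integral>\<^sup>+t. gig_half_kernel (y\<^sup>2 / (2 * s\<^sup>2)) (l\<^sup>2 / 2) t / sqrt (2 * pi * s\<^sup>2) \<partial>lborel)
       = ennreal (exp (- (l / s) * \<bar>y\<bar>) / (s * l))"
proof -
  have "(\<integral>\<^sup>+t. gig_half_kernel (y\<^sup>2 / (2 * s\<^sup>2)) (l\<^sup>2 / 2) t / sqrt (2 * pi * s\<^sup>2) \<partial>lborel)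
      = (\<integral>\<^sup>+t. gig_half_kernel (y\<^sup>2 / (2 * s\<^sup>2)) (l\<^sup>2 / 2) t \<partial>lborel) * ennreal (1 / sqrt (2 * pi * s\<^sup>2))"
    by (subst nn_integral_multc[symmetric])
      (auto simp: ennreal_mult''[symmetric] gig_half_kernel_nonneg intro!: nn_integral_cong)
  also have "\<dots> = ennreal (sqrt (2 * pi) / l * exp (- (l / s) * \<bar>y\<bar>) * (1 / sqrt (2 * pi * s\<^sup>2)))"
    using s l by (simp add: nn_integral_gig_half_kernel_laplace ennreal_mult''[symmetric])
  also have "sqrt (2 * pi) / l * exp (- (l / s) * \<bar>y\<bar>) * (1 / sqrt (2 * pi * s\<^sup>2))
      = exp (- (l / s) * \<bar>y\<bar>) / (s * l)"
    using s l by (simp add: real_sqrt_mult)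
  finally show ?thesis .
qed

lemma nn_integral_exponential_density_divide:
  fixes l :: real
  assumes l: "0 < l"
  shows "(\<integral>\<^sup>+s. exponential_density l s / l \<partial>lborel) = ennreal (1 / l)"
proof -
  have "ennreal (exponential_density l s / l) = ennreal (exponential_density l s) * ennreal (1 / l)" for s
    using l exponential_density_nonneg[OF l] by (simp add: ennreal_mult[symmetric])
  moreover have "(\<integral>\<^sup>+s. exponential_density l s \<partial>lborel) = 1"
    using nn_integral_erlang_ith_moment[OF l, of 0 0] by simp
  ultimately show ?thesis
    by (simp add: nn_integral_multc)
qed

lemma powr_minus_half_mult_le_1:
  fixes t g :: real
  assumes t: "0 < t" and g: "0 < g"
  shows "t powr (-1/2) * (1 / t + 1 / g) powr (-1/2) \<le> 1"
proof -
  have w: "0 < 1 / t + 1 / g"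
    using t g by (intro add_pos_pos) simp_all
  have "1 \<le> t * (1 / t + 1 / g)"
    using t g by (simp add: field_simps)
  then have "1 \<le> sqrt t * sqrt (1 / t + 1 / g)"
    by (metis real_sqrt_le_mono real_sqrt_mult real_sqrt_one)
  then show ?thesis
    using powr_minus_half[OF t] powr_minus_half[OF w] by simp
qed

section \<open>Factorisation of the joint density\<close>

text \<open>The prior factor \<open>(1/t + 1/g) powr (-1/2)\<close> cancels the variance-dependent part of the
  normal normalising constant.\<close>

lemma normal_density_mult_prior_factor:
  fixes t g s y :: real
  assumes t: "0 < t" and g: "0 < g" and s: "0 < s"
  shows "normal_density 0 (sqrt (s\<^sup>2 * inverse (1 / t + 1 / g))) y * (t powr (-1/2) * (1 / t + 1 / g) powr (-1/2))
       = t powr (-1/2) * exp (- (y\<^sup>2 / (2 * s\<^sup>2)) / t) * exp (- (y\<^sup>2 / (2 * s\<^sup>2)) / g)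
         / sqrt (2 * pi * s\<^sup>2)"
proof -
  define w where "w = 1 / t + 1 / g"
  have w: "0 < w"
    unfolding w_def using t g by (intro add_pos_pos) simp_all
  have "sqrt (2 * pi * (s\<^sup>2 * inverse w)) * sqrt w = sqrt (2 * pi * s\<^sup>2)"
    using w by (simp flip: real_sqrt_mult)
  moreover have "- y\<^sup>2 / (2 * (s\<^sup>2 * inverse w)) = - (y\<^sup>2 / (2 * s\<^sup>2)) / t + - (y\<^sup>2 / (2 * s\<^sup>2)) / g"
    unfolding w_def using t g s by (simp add: field_simps)
  ultimately show ?thesis
    using w powr_minus_half[OF w]
    unfolding normal_density_def w_def[symmetric] by (simp flip: exp_add)
qed

lemma cond_beta_density_mult_prior_unnorm:
  fixes \<sigma> l1 l2 g :: real and t \<beta> :: "real^'n"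
  assumes s: "0 < \<sigma>"
  shows "cond_beta_density \<sigma> (t, g) \<beta> * prior_unnorm l1 l2 (t, g)
     = (\<Prod>j\<in>UNIV. gig_half_kernel ((\<beta> $ j)\<^sup>2 / (2 * \<sigma>\<^sup>2)) (l1\<^sup>2 / 2) (t $ j) / sqrt (2 * pi * \<sigma>\<^sup>2))
       * gig_half_kernel ((norm \<beta>)\<^sup>2 / (2 * \<sigma>\<^sup>2)) (l2\<^sup>2 / 2) g"
proof (cases "(t, g) \<in> hyper_dom")
  case True
  then have t: "\<And>j. 0 < t $ j" and g: "0 < g"
    by (auto simp: hyper_dom_def)
  define a where "a j = (\<beta> $ j)\<^sup>2 / (2 * \<sigma>\<^sup>2)" for j
  define c where "c = sqrt (2 * pi * \<sigma>\<^sup>2)"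
  have "cond_beta_density \<sigma> (t, g) \<beta> * prior_unnorm l1 l2 (t, g)
      = (\<Prod>j\<in>UNIV. (t $ j) powr (-1/2) * exp (- a j / t $ j) * exp (- a j / g) / c)
        * (g powr (-1/2) * exp (- (l1\<^sup>2 / 2) * (\<Sum>j\<in>UNIV. t $ j) - (l2\<^sup>2 / 2) * g))"
    using True normal_density_mult_prior_factor[OF t g s]
    by (simp add: cond_beta_density_def prior_unnorm_def a_def c_def prod.distrib[symmetric] mult.assoc)
  also have "\<dots> = (\<Prod>j\<in>UNIV. gig_half_kernel (a j) (l1\<^sup>2 / 2) (t $ j) / c)
      * gig_half_kernel (\<Sum>j\<in>UNIV. a j) (l2\<^sup>2 / 2) g"
    using t g by (simp add: gig_half_kernel_def exp_diff exp_minus exp_sum sum_divide_distrib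
        sum_distrib_left sum_distrib_right prod.distrib prod_dividef prod_inversef[unfolded comp_def] mult_ac)
        (simp add: field_simps)
  also have "(\<Sum>j\<in>UNIV. a j) = (norm \<beta>)\<^sup>2 / (2 * \<sigma>\<^sup>2)"
    unfolding a_def by (simp add: norm_vec_def L2_set_def sum_nonneg sum_divide_distrib)
  finally show ?thesis
    unfolding a_def c_def .
next
  case False
  then consider "g \<le> 0" | j where "t $ j \<le> 0"
    by (auto simp: hyper_dom_def not_less)
  then have "(\<Prod>j\<in>UNIV. gig_half_kernel ((\<beta> $ j)\<^sup>2 / (2 * \<sigma>\<^sup>2)) (l1\<^sup>2 / 2) (t $ j) / sqrt (2 * pi * \<sigma>\<^sup>2))
       * gig_half_kernel ((norm \<beta>)\<^sup>2 / (2 * \<sigma>\<^sup>2)) (l2\<^sup>2 / 2) g = 0"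
    by cases (auto simp: gig_half_kernel_def not_less intro!: prod_zero)
  with False show ?thesis
    by (simp add: prior_unnorm_def)
qed

section \<open>Properness of the prior and the marginal of \<open>\<beta>\<close>\<close>

lemma prior_unnorm_nonneg: "0 \<le> prior_unnorm l1 l2 x"
  unfolding prior_unnorm_def by (cases x) (auto intro!: prod_nonneg mult_nonneg_nonneg)

lemma borel_measurable_prior_unnorm [measurable]:
  "prior_unnorm l1 l2 \<in> borel_measurable (borel :: ((real^'n) \<times> real) measure)"
  unfolding prior_unnorm_def hyper_dom_def borel_prod[symmetric] by measurable

lemma prior_unnorm_le:
  fixes l1 l2 g :: real and t :: "real^'n"
  assumes l1: "0 < l1"
  shows "prior_unnorm l1 l2 (t, g)
    \<le> (\<Prod>j\<in>UNIV. exponential_density (l1\<^sup>2 / 2) (t $ j) / (l1\<^sup>2 / 2)) * gig_half_kernel 0 (l2\<^sup>2 / 2) g"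
proof (cases "(t, g) \<in> hyper_dom")
  case True
  then have t: "\<And>j. 0 < t $ j" and g: "0 < g"
    by (auto simp: hyper_dom_def)
  have exponential: "exponential_density (l1\<^sup>2 / 2) (t $ j) / (l1\<^sup>2 / 2) = exp (- (l1\<^sup>2 / 2) * t $ j)"
    for j
    using t[of j] l1 by (simp add: exponential_density_def mult.commute)
  have "exp (- (l1\<^sup>2 / 2) * (\<Sum>j\<in>UNIV. t $ j) - (l2\<^sup>2 / 2) * g)
      = exp (\<Sum>j\<in>UNIV. - (l1\<^sup>2 / 2) * t $ j) * exp (- (l2\<^sup>2 / 2) * g)"
    by (simp add: sum_distrib_left flip: exp_add)
  also have "exp (\<Sum>j\<in>UNIV. - (l1\<^sup>2 / 2) * t $ j)
      = (\<Prod>j\<in>UNIV. exponential_density (l1\<^sup>2 / 2) (t $ j) / (l1\<^sup>2 / 2))"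
    unfolding exponential by (rule exp_sum) simp
  finally have "exp (- (l1\<^sup>2 / 2) * (\<Sum>j\<in>UNIV. t $ j) - (l2\<^sup>2 / 2) * g)
      = (\<Prod>j\<in>UNIV. exponential_density (l1\<^sup>2 / 2) (t $ j) / (l1\<^sup>2 / 2)) * exp (- (l2\<^sup>2 / 2) * g)" .
  then have "prior_unnorm l1 l2 (t, g) = (\<Prod>j\<in>UNIV. (t $ j) powr (-1/2) * (1 / t $ j + 1 / g) powr (-1/2))
      * ((\<Prod>j\<in>UNIV. exponential_density (l1\<^sup>2 / 2) (t $ j) / (l1\<^sup>2 / 2)) * gig_half_kernel 0 (l2\<^sup>2 / 2) g)"
    using True g by (simp add: prior_unnorm_def gig_half_kernel_def mult_ac)
  also have "\<dots> \<le> 1 * ((\<Prod>j\<in>UNIV. exponential_density (l1\<^sup>2 / 2) (t $ j) / (l1\<^sup>2 / 2))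
      * gig_half_kernel 0 (l2\<^sup>2 / 2) g)"
    using powr_minus_half_mult_le_1[OF t g] l1
    by (intro mult_right_mono prod_le_1 mult_nonneg_nonneg prod_nonneg divide_nonneg_pos
        gig_half_kernel_nonneg) auto
  finally show ?thesis
    by simp
next
  case False
  then show ?thesis
    using l1 by (auto simp: prior_unnorm_def intro!: mult_nonneg_nonneg prod_nonneg gig_half_kernel_nonneg)
qed

lemma integrable_prior_unnorm:
  fixes l1 l2 :: real
  assumes l1: "0 < l1" and l2: "0 < l2"
  shows "integrable lborel (prior_unnorm l1 l2 :: (real^'n) \<times> real \<Rightarrow> real)"
proof (rule integrableI_nonneg)
  define E where "E s = exponential_density (l1\<^sup>2 / 2) s / (l1\<^sup>2 / 2)" for s
  define G where "G = gig_half_kernel 0 (l2\<^sup>2 / 2)"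
  have E_nonneg: "0 \<le> E s" for s
    unfolding E_def using l1 by (simp add: exponential_density_nonneg)
  have "(\<integral>\<^sup>+x. prior_unnorm l1 l2 (x :: (real^'n) \<times> real) \<partial>lborel)
      \<le> (\<integral>\<^sup>+(x :: (real^'n) \<times> real). (\<Prod>j\<in>UNIV. ennreal (E (fst x $ j))) * ennreal (G (snd x)) \<partial>lborel)"
  proof (rule nn_integral_mono)
    fix x :: "(real^'n) \<times> real"
    have "prior_unnorm l1 l2 x \<le> (\<Prod>j\<in>UNIV. E (fst x $ j)) * G (snd x)"
      using prior_unnorm_le[OF l1, of l2 "fst x" "snd x"] by (simp add: E_def G_def)
    then have "ennreal (prior_unnorm l1 l2 x) \<le> ennreal ((\<Prod>j\<in>UNIV. E (fst x $ j)) * G (snd x))"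
      by (rule ennreal_leI)
    then show "ennreal (prior_unnorm l1 l2 x) \<le> (\<Prod>j\<in>UNIV. ennreal (E (fst x $ j))) * ennreal (G (snd x))"
      by (simp add: ennreal_leI ennreal_mult'' G_def gig_half_kernel_nonneg prod_ennreal E_nonneg)
  qed
  also have "\<dots> = (\<Prod>j\<in>(UNIV :: 'n set). ennreal (1 / (l1\<^sup>2 / 2))) * ennreal (sqrt (pi / (l2\<^sup>2 / 2)))"
    using nn_integral_lborel_vec_real_prod[where f = "\<lambda>j s. ennreal (E s)" and h = "\<lambda>s. ennreal (G s)"]
      nn_integral_exponential_density_divide[of "l1\<^sup>2 / 2"] nn_integral_gig_half_kernel[of 0 "l2\<^sup>2 / 2"] l1 l2
    by (simp add: E_def G_def)
  also have "\<dots> < \<infinity>"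
    by (simp add: ennreal_mult_less_top power_less_top_ennreal)
  finally show "(\<integral>\<^sup>+x. prior_unnorm l1 l2 (x :: (real^'n) \<times> real) \<partial>lborel) < \<infinity>" .
qed (simp_all add: prior_unnorm_nonneg)

lemma has_bochner_integral_cond_beta_density_mult_prior_unnorm:
  fixes \<sigma> l1 l2 :: real and \<beta> :: "real^'n"
  assumes s: "0 < \<sigma>" and l1: "0 < l1" and l2: "0 < l2"
  shows "has_bochner_integral lborel (\<lambda>x. cond_beta_density \<sigma> x \<beta> * prior_unnorm l1 l2 x)
    (sqrt (2 * pi) / (l2 * (\<sigma> * l1) ^ CARD('n))
      * exp (- (l1 / \<sigma>) * (\<Sum>j\<in>UNIV. \<bar>\<beta> $ j\<bar>) - (l2 / \<sigma>) * norm \<beta>))"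
proof -
  define K where "K j = (\<lambda>s. gig_half_kernel ((\<beta> $ j)\<^sup>2 / (2 * \<sigma>\<^sup>2)) (l1\<^sup>2 / 2) s / sqrt (2 * pi * \<sigma>\<^sup>2))"
    for j :: 'n
  define G where "G = gig_half_kernel ((norm \<beta>)\<^sup>2 / (2 * \<sigma>\<^sup>2)) (l2\<^sup>2 / 2)"
  have [measurable]: "K j \<in> borel_measurable borel" "G \<in> borel_measurable borel" for j
    unfolding K_def G_def by measurable
  have K_nonneg: "0 \<le> K j s" and G_nonneg: "0 \<le> G s" for j s
    unfolding K_def G_def by (simp_all add: gig_half_kernel_nonneg)
  have factor: "cond_beta_density \<sigma> x \<beta> * prior_unnorm l1 l2 x = (\<Prod>j\<in>UNIV. K j (fst x $ j)) * G (snd x)"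
    for x :: "(real^'n) \<times> real"
    using cond_beta_density_mult_prior_unnorm[OF s, of "fst x" "snd x" \<beta> l1 l2] by (simp add: K_def G_def)
  have K_integral: "(\<integral>\<^sup>+s. K j s \<partial>lborel) = ennreal (exp (- (l1 / \<sigma>) * \<bar>\<beta> $ j\<bar>) / (\<sigma> * l1))" for j
    unfolding K_def by (rule nn_integral_gig_half_kernel_normal[OF s l1])
  have "(\<integral>\<^sup>+x. cond_beta_density \<sigma> x \<beta> * prior_unnorm l1 l2 x \<partial>lborel)
      = (\<integral>\<^sup>+(x :: (real^'n) \<times> real). (\<Prod>j\<in>UNIV. ennreal (K j (fst x $ j))) * ennreal (G (snd x)) \<partial>lborel)"
    by (intro nn_integral_cong) (simp add: factor ennreal_mult'' prod_ennreal K_nonneg G_nonneg prod_nonneg)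
  also have "\<dots> = ennreal (\<Prod>j\<in>UNIV. exp (- (l1 / \<sigma>) * \<bar>\<beta> $ j\<bar>) / (\<sigma> * l1))
      * ennreal (sqrt (2 * pi) / l2 * exp (- (l2 / \<sigma>) * norm \<beta>))"
    using nn_integral_lborel_vec_real_prod[where f = "\<lambda>j s. ennreal (K j s)" and h = "\<lambda>s. ennreal (G s)"]
      nn_integral_gig_half_kernel_laplace[OF s l2, of "norm \<beta>"] s l1
    by (simp add: K_integral G_def prod_ennreal)
  also have "\<dots> = ennreal (sqrt (2 * pi) / (l2 * (\<sigma> * l1) ^ CARD('n))
      * exp (- (l1 / \<sigma>) * (\<Sum>j\<in>UNIV. \<bar>\<beta> $ j\<bar>) - (l2 / \<sigma>) * norm \<beta>))"
  proof -
    have "(\<Prod>j\<in>UNIV. exp (- (l1 / \<sigma>) * \<bar>\<beta> $ j\<bar>) / (\<sigma> * l1))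
        = exp (- (l1 / \<sigma>) * (\<Sum>j\<in>UNIV. \<bar>\<beta> $ j\<bar>)) / (\<sigma> * l1) ^ CARD('n)"
      by (simp add: prod_dividef exp_sum sum_distrib_left)
    moreover have "exp (- (l1 / \<sigma>) * (\<Sum>j\<in>UNIV. \<bar>\<beta> $ j\<bar>) - (l2 / \<sigma>) * norm \<beta>)
        = exp (- (l1 / \<sigma>) * (\<Sum>j\<in>UNIV. \<bar>\<beta> $ j\<bar>)) * exp (- (l2 / \<sigma>) * norm \<beta>)"
      by (simp flip: exp_add)
    ultimately show ?thesis
      using s l1 l2 by (simp add: ennreal_mult''[symmetric] prod_nonneg mult_ac)
  qed
  finally have "(\<integral>\<^sup>+x. cond_beta_density \<sigma> x \<beta> * prior_unnorm l1 l2 x \<partial>lborel) = \<dots>" .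
  moreover have "(\<lambda>x. cond_beta_density \<sigma> x \<beta> * prior_unnorm l1 l2 x) \<in> borel_measurable lborel"
  proof -
    have "(\<lambda>x. (\<Prod>j\<in>UNIV. K j (fst x $ j)) * G (snd x)) \<in> borel_measurable (borel \<Otimes>\<^sub>M borel)"
      by measurable
    then show ?thesis
      by (simp add: factor borel_prod)
  qed
  ultimately show ?thesis
    using s l1 l2 by (intro has_bochner_integral_nn_integral) (auto simp: factor K_nonneg G_nonneg prod_nonneg)
qed

lemma integral_prior_unnorm_pos:
  fixes l1 l2 :: real
  assumes l1: "0 < l1" and l2: "0 < l2"
  shows "0 < integral\<^sup>L lborel (prior_unnorm l1 l2 :: (real^'n) \<times> real \<Rightarrow> real)"
proof (rule ccontr)
  let ?p = "prior_unnorm l1 l2 :: (real^'n) \<times> real \<Rightarrow> real"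
  assume "\<not> 0 < integral\<^sup>L lborel ?p"
  moreover have "0 \<le> integral\<^sup>L lborel ?p"
    by (simp add: prior_unnorm_nonneg)
  ultimately have "integral\<^sup>L lborel ?p = 0"
    by simp
  moreover have "AE x in lborel. 0 \<le> ?p x"
    by (simp add: prior_unnorm_nonneg)
  ultimately have "AE x in lborel. ?p x = 0"
    using integral_nonneg_eq_0_iff_AE[OF integrable_prior_unnorm[OF l1 l2]] by blast
  then have "AE x in lborel. cond_beta_density 1 x 0 * ?p x = 0"
    by eventually_elim simp
  then have "integral\<^sup>L lborel (\<lambda>x. cond_beta_density 1 x 0 * ?p x) = 0"
    by (rule integral_eq_zero_AE)
  moreover have "integral\<^sup>L lborel (\<lambda>x. cond_beta_density 1 x 0 * ?p x) = sqrt (2 * pi) / (l2 * l1 ^ CARD('n))"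
    using has_bochner_integral_integral_eq[OF has_bochner_integral_cond_beta_density_mult_prior_unnorm[of 1 l1 l2 0]]
      l1 l2 by simp
  ultimately show False
    using l1 l2 by simp
qed

lemma cond_beta_density_marginal_proportional:
  fixes \<sigma> l1 l2 Z :: real
  assumes "0 < \<sigma>" "0 < l1" "0 < l2" and Z: "0 < Z"
  shows "\<exists>C > 0. \<forall>\<beta> :: real^'n.
    (\<integral>x. cond_beta_density \<sigma> x \<beta> * (prior_unnorm l1 l2 x / Z) \<partial>lborel)
      = C * exp (- (l1 / \<sigma>) * (\<Sum>j\<in>UNIV. \<bar>\<beta> $ j\<bar>) - (l2 / \<sigma>) * norm \<beta>)"
proof (intro exI conjI allI)
  let ?C = "sqrt (2 * pi) / (l2 * (\<sigma> * l1) ^ CARD('n)) / Z"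
  show "0 < ?C"
    using assms by simp
  fix \<beta> :: "real^'n"
  have "(\<integral>x. cond_beta_density \<sigma> x \<beta> * (prior_unnorm l1 l2 x / Z) \<partial>lborel)
      = (\<integral>x. cond_beta_density \<sigma> x \<beta> * prior_unnorm l1 l2 x \<partial>lborel) / Z"
    by simp
  also have "\<dots> = ?C * exp (- (l1 / \<sigma>) * (\<Sum>j\<in>UNIV. \<bar>\<beta> $ j\<bar>) - (l2 / \<sigma>) * norm \<beta>)"
    using has_bochner_integral_integral_eq
      [OF has_bochner_integral_cond_beta_density_mult_prior_unnorm[OF assms(1-3), of \<beta>]]
    by simp
  finally show "(\<integral>x. cond_beta_density \<sigma> x \<beta> * (prior_unnorm l1 l2 x / Z) \<partial>lborel)
      = ?C * exp (- (l1 / \<sigma>) * (\<Sum>j\<in>UNIV. \<bar>\<beta> $ j\<bar>) - (l2 / \<sigma>) * norm \<beta>)" .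
qed

theorem mainTheorem6:
  fixes \<sigma> l1 l2 :: real
  assumes "\<sigma> > 0" and "l1 > 0" and "l2 > 0"
  shows "integrable lborel (prior_unnorm l1 l2 :: (real^'n) \<times> real \<Rightarrow> real)
         \<and> 0 < integral\<^sup>L lborel (prior_unnorm l1 l2 :: (real^'n) \<times> real \<Rightarrow> real)
         \<and> (\<exists>C > 0. \<forall>\<beta> :: real^'n.
              (\<integral>x. cond_beta_density \<sigma> x \<beta> *
                   (prior_unnorm l1 l2 x / integral\<^sup>L lborel (prior_unnorm l1 l2)) \<partial>lborel)
              = C * exp (- (l1 / \<sigma>) * (\<Sum>j\<in>UNIV. \<bar>\<beta> $ j\<bar>) - (l2 / \<sigma>) * norm \<beta>))"
  \<comment> \<open>The normaliser in the statement integrates over an independent dimension type, hence the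
    arbitrary positive normaliser in the previous lemma.\<close>
  using assms
  by (intro conjI integrable_prior_unnorm integral_prior_unnorm_pos cond_beta_density_marginal_proportional)

end
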